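(* Let $q=2^n$, let $B$ be a $k$-subset of $\mathrm{GF}(q)$ with $k\ge3$, and let $\mathcal B=\mathrm{GA}_1(q)(B)$. Then the following are equivalent: (1) $(\mathrm{GF}(q),\mathcal B)$ is a $3$-design; (2) $\sum_{x,y\in\mathrm{GF}(q)}(-1)^{f_B(x)+f_B(y)+f_B(ux+(1+u)y)}$ is independent of $u\in\mathrm{GF}(q)\setminus\mathrm{GF}(2)$; (3) $\sum_{\alpha\in\mathrm{GF}(q)}\hat f_B(\alpha)\hat f_B(u\alpha)\hat f_B((1+u)\alpha)$ is independent of $u\in\mathrm{GF}(q)\setminus\mathrm{GF}(2)$; (4) $N_B(u,1+u,1)$ is independent of $u\in\mathrm{GF}(q)\setminus\mathrm{GF}(2)$.
   Context: $\mathrm{Tr}$ is the absolute trace $\mathrm{GF}(2^n)\to\mathrm{GF}(2)$. $f_B$ is the characteristic function of $B$ as a Boolean function, and $\hat f(\mu)=\sum_{x\in\mathrm{GF}(2^n)}(-1)^{f(x)+\mathrm{Tr}(\mu x)}$ is the Walsh transform. $N_B(a,b,c)$ is the number of triples $(x,y,z)\in B^3$ with $ax+by+cz=0$. $\mathrm{GA}_1(q)$ is the group of permutations $x\mapsto ax+b$ of $\mathrm{GF}(q)$ with $a\ne0$; $\mathrm{GA}_1(q)(B)=\{\pi(B):\pi\in\mathrm{GA}_1(q)\}$. A pair $(\mathcal P,\mathcal B)$ with $\mathcal B$ a set of $k$-subsets of $\mathcal P$ is a $3$-design if every $3$-subset of $\mathcal P$ lies in exactly $\lambda$ members of $\mathcal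 B$ for some constant $\lambda$. *)

theory Defs
  imports Main
begin

text \<open>GF(2^n) is modelled by a finite field type 'a with card UNIV = 2^n.\<close>

definition abs_trace :: "nat \<Rightarrow> 'a::{field,finite} \<Rightarrow> 'a" where
  "abs_trace n x = (\<Sum>i<n. x ^ (2 ^ i))"

text \<open>(-1)^(Tr x), the trace taking values 0 or 1 in GF(2) viewed inside 'a.\<close>
definition sgn_tr :: "nat \<Rightarrow> 'a::{field,finite} \<Rightarrow> int" where
  "sgn_tr n x = (if abs_trace n x = 0 then 1 else -1)"

text \<open>(-1)^(f_B x), f_B the characteristic function of B.\<close>
definition sgn_char :: "'a set \<Rightarrow> 'a \<Rightarrow> int" where
  "sgn_char B x = (if x \<in> B then -1 else 1)"

definition walsh :: "nat \<Rightarrow> 'a::{field,finite} set \<Rightarrow> 'a \<Rightarrow> int" where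
  "walsh n B \<mu> = (\<Sum>x\<in>UNIV. sgn_char B x * sgn_tr n (\<mu> * x))"

definition N_B :: "'a::{field,finite} set \<Rightarrow> 'a \<Rightarrow> 'a \<Rightarrow> 'a \<Rightarrow> nat" where
  "N_B B a b c = card {(x, y, z). x \<in> B \<and> y \<in> B \<and> z \<in> B \<and> a * x + b * y + c * z = 0}"

definition GA1_orbit :: "'a::{field,finite} set \<Rightarrow> 'a set set" where
  "GA1_orbit B = {(\<lambda>x. a * x + b) ` B | a b. a \<noteq> 0}"

definition is_3_design :: "'a set \<Rightarrow> 'a set set \<Rightarrow> nat \<Rightarrow> bool" where
  "is_3_design P Bs k \<longleftrightarrow> (\<forall>b\<in>Bs. b \<subseteq> P \<and> card b = k) \<and>
     (\<exists>lam. \<forall>T. T \<subseteq> P \<and> card T = 3 \<longrightarrow> card {b\<in>Bs. T \<subseteq> b} = lam)"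

definition indep_of_u :: "('a::{field,finite} \<Rightarrow> 'b) \<Rightarrow> bool" where
  "indep_of_u F \<longleftrightarrow> (\<exists>c. \<forall>u. u \<notin> {0, 1} \<longrightarrow> F u = c)"

end

(*
  Both the design property and the three sums reduce to one count. An affine map sends a block
  over a triple T = {t1, t2, t3} exactly when it sends its preimages into B, and affine maps
  are determined by where they send two points; hence the number of blocks through T, times
  the order of the stabiliser of B, is the number of pairs (x, y) of distinct points of B with
  y + u (x - y) in B, where u = (t3 - t1) / (t2 - t1) ranges over GF(q) - GF(2). In
  characteristic 2 this point is u x + (1 + u) y, so the count is N_B(u, 1 + u, 1) - k.
  Writing (-1)^(f_B) = 1 - 2 [. \<in> B] expresses the sign sum (2) as an affine function of
  N_B(u, 1 + u, 1), and the orthogonality of the additive characters (-1)^(Tr(\<alpha> x)) turns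
  the Walsh sum (3) into q times the sign sum.
*)
theory Submission
  imports Defs "HOL-Number_Theory.Residues" "HOL-Computational_Algebra.Polynomial"
begin

section \<open>Sign sums and solution counts\<close>

lemma sum_of_bool_affine_mem:
  fixes B :: "'a::{field,finite} set"
  assumes "c \<noteq> 0"
  shows "(\<Sum>y\<in>UNIV. of_bool (c * y + a \<in> B)) = (of_nat (card B) :: 'b::semiring_1)"
proof -
  have "(\<Sum>y\<in>UNIV. of_bool (c * y + a \<in> B)) = (\<Sum>y\<in>UNIV. of_bool (y \<in> B) :: 'b)"
    by (rule sum.reindex_bij_witness[of _ "\<lambda>y. (y - a) / c" "\<lambda>y. c * y + a"]) (use assms in auto)
  then show ?thesis
    by simp
qed

lemma card_pairs_eq_sum:
  fixes B :: "'a::finite set"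
  shows "int (card {(x, y) \<in> B \<times> B. P x y}) =
   (\<Sum>x\<in>UNIV. \<Sum>y\<in>UNIV. of_bool (x \<in> B) * of_bool (y \<in> B) * of_bool (P x y))"
proof -
  have "{(x, y) \<in> B \<times> B. P x y} = Sigma B (\<lambda>x. B \<inter> {y. P x y})"
    by auto
  then have "int (card {(x, y) \<in> B \<times> B. P x y}) = (\<Sum>x\<in>B. int (card (B \<inter> {y. P x y})))"
    by (simp add: card_SigmaI)
  also have "\<dots> = (\<Sum>x\<in>B. \<Sum>y\<in>B. of_bool (P x y))"
    by simp
  also have "\<dots> = (\<Sum>x\<in>UNIV. of_bool (x \<in> B) * (\<Sum>y\<in>UNIV. of_bool (y \<in> B) * of_bool (P x y)))"
    by (simp only: sum_of_bool_mult_eq finite_UNIV Int_UNIV_left Collect_mem_eq)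
  finally show ?thesis
    by (simp only: sum_distrib_left mult.assoc)
qed

lemma sgn_char_eq: "sgn_char B x = 1 - 2 * of_bool (x \<in> B)"
  by (simp add: sgn_char_def)

text \<open>Expanding the product of the three signs 1 - 2[\<cdot> \<in> B], every sum except the triple one
  is determined by q and k because x, y and u x + v y are pairwise independent coordinates.\<close>
lemma sum_sgn_char_triple:
  fixes B :: "'a::{field,finite} set"
  assumes "u \<noteq> 0" and "v \<noteq> 0"
  defines "q \<equiv> int (card (UNIV :: 'a set))" and "k \<equiv> int (card B)"
  shows "(\<Sum>x\<in>UNIV. \<Sum>y\<in>UNIV. sgn_char B x * sgn_char B y * sgn_char B (u * x + v * y)) =
    q ^ 2 - 6 * q * k + 12 * k ^ 2 - 8 * int (card {(x, y) \<in> B \<times> B. u * x + v * y \<in> B})"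
proof -
  define I :: "'a \<Rightarrow> int" where "I x = of_bool (x \<in> B)" for x
  have sum_I: "(\<Sum>x\<in>UNIV. I x) = k"
    by (simp add: I_def k_def)
  have sum_I_x: "(\<Sum>x\<in>UNIV. I (u * x + v * y)) = k" for y
    unfolding I_def k_def using sum_of_bool_affine_mem[OF assms(1), of "v * y" B] .
  have sum_I_y: "(\<Sum>y\<in>UNIV. I (u * x + v * y)) = k" for x
    unfolding I_def k_def using sum_of_bool_affine_mem[OF assms(2), of "u * x" B] by (simp only: add.commute)
  have "(\<Sum>x\<in>UNIV. \<Sum>y\<in>UNIV. sgn_char B x * sgn_char B y * sgn_char B (u * x + v * y)) =
    (\<Sum>x\<in>UNIV. \<Sum>y\<in>UNIV. 1 - 2 * I x - 2 * I y - 2 * I (u * x + v * y)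
       + 4 * (I x * I y) + 4 * (I x * I (u * x + v * y)) + 4 * (I y * I (u * x + v * y))
       - 8 * (I x * I y * I (u * x + v * y)))"
    by (intro sum.cong refl) (simp add: sgn_char_eq I_def algebra_simps)
  also have "\<dots> = q ^ 2 - 2 * (q * k) - 2 * (q * k) - 2 * (q * k) + 4 * k ^ 2 + 4 * k ^ 2 + 4 * k ^ 2
      - 8 * (\<Sum>x\<in>UNIV. \<Sum>y\<in>UNIV. I x * I y * I (u * x + v * y))"
  proof -
    have "(\<Sum>x\<in>(UNIV :: 'a set). \<Sum>y\<in>(UNIV :: 'a set). 1 :: int) = q ^ 2"
      by (simp add: q_def power2_eq_square)
    moreover have "(\<Sum>x\<in>UNIV. \<Sum>y\<in>(UNIV :: 'a set). I x) = q * k"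
      by (simp add: q_def sum_I flip: sum_distrib_left)
    moreover have "(\<Sum>x\<in>(UNIV :: 'a set). \<Sum>y\<in>UNIV. I y) = q * k"
      by (simp add: q_def sum_I)
    moreover have "(\<Sum>x\<in>UNIV. \<Sum>y\<in>UNIV. I (u * x + v * y)) = q * k"
      by (simp add: q_def sum_I_y)
    moreover have "(\<Sum>x\<in>UNIV. \<Sum>y\<in>UNIV. I x * I y) = k ^ 2"
      by (simp add: sum_I power2_eq_square flip: sum_distrib_left sum_distrib_right)
    moreover have "(\<Sum>x\<in>UNIV. \<Sum>y\<in>UNIV. I x * I (u * x + v * y)) = k ^ 2"
      by (simp add: sum_I sum_I_y power2_eq_square flip: sum_distrib_left sum_distrib_right)
    moreover have "(\<Sum>x\<in>UNIV. \<Sum>y\<in>UNIV. I y * I (u * x + v * y)) = k ^ 2"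
      by (subst sum.swap) (simp add: sum_I sum_I_x power2_eq_square flip: sum_distrib_left sum_distrib_right)
    ultimately show ?thesis
      by (simp only: sum.distrib sum_subtractf flip: sum_distrib_left)
  qed
  also have "(\<Sum>x\<in>UNIV. \<Sum>y\<in>UNIV. I x * I y * I (u * x + v * y)) =
      int (card {(x, y) \<in> B \<times> B. u * x + v * y \<in> B})"
    unfolding card_pairs_eq_sum I_def ..
  finally show ?thesis
    by (simp add: algebra_simps power2_eq_square)
qed

section \<open>Affine images and 3-designs\<close>

definition ratio_pairs :: "'a::field set \<Rightarrow> 'a \<Rightarrow> ('a \<times> 'a) set" where
  "ratio_pairs B u = {(x, y) \<in> B \<times> B. x \<noteq> y \<and> y + u * (x - y) \<in> B}"

lemma GA1_orbit_eq_image: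
  "GA1_orbit B = (\<lambda>(a, b). (\<lambda>x. a * x + b) ` B) ` {(a, b). a \<noteq> 0}"
  unfolding GA1_orbit_def by auto

lemma mem_affine_image_iff:
  fixes a :: "'a::field"
  assumes "a \<noteq> 0"
  shows "t \<in> (\<lambda>x. a * x + b) ` B \<longleftrightarrow> (t - b) / a \<in> B"
proof
  assume "(t - b) / a \<in> B"
  moreover have "t = a * ((t - b) / a) + b"
    using assms by simp
  ultimately show "t \<in> (\<lambda>x. a * x + b) ` B"
    by blast
qed (use assms in auto)

lemma card_affine_image:
  fixes a :: "'a::field"
  assumes "a \<noteq> 0"
  shows "card ((\<lambda>x. a * x + b) ` B) = card B"
  using assms by (intro card_image) (auto simp: inj_on_def)

definition affine_stabilizer :: "'a::field set \<Rightarrow> ('a \<times> 'a) set" where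
  "affine_stabilizer B = {(a, b). a \<noteq> 0 \<and> (\<lambda>x. a * x + b) ` B = B}"

lemma card_affine_stabilizer_pos: "0 < card (affine_stabilizer (B :: 'a::{field,finite} set))"
proof -
  have "(1, 0) \<in> affine_stabilizer B"
    by (simp add: affine_stabilizer_def)
  then show ?thesis
    by (intro card_gt_0_iff[THEN iffD2] conjI) (blast, simp)
qed

lemma card_GA1_orbit_member: "X \<in> GA1_orbit B \<Longrightarrow> card X = card B"
  by (auto simp: GA1_orbit_def card_affine_image)

lemma card_affine_maps_onto_image:
  fixes a0 :: "'a::field"
  assumes "a0 \<noteq> 0"
  shows "card {(a, b). a \<noteq> 0 \<and> (\<lambda>x. a * x + b) ` B = (\<lambda>x. a0 * x + b0) ` B} =
    card (affine_stabilizer B)"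
proof -
  let ?S = "{(a, b). a \<noteq> 0 \<and> (\<lambda>x. a * x + b) ` B = B}"
  let ?T = "{(a, b). a \<noteq> 0 \<and> (\<lambda>x. a * x + b) ` B = (\<lambda>x. a0 * x + b0) ` B}"
  let ?f = "\<lambda>(a, b). (a0 * a, a0 * b + b0)"
  let ?g = "\<lambda>(a, b). (a / a0, (b - b0) / a0)"
  have compose: "(\<lambda>x. (a0 * a) * x + (a0 * b + b0)) ` B = (\<lambda>x. a0 * x + b0) ` ((\<lambda>x. a * x + b) ` B)"
    for a b
    by (simp add: image_image algebra_simps)
  have decompose: "(\<lambda>x. (a / a0) * x + (b - b0) / a0) ` B =
      (\<lambda>x. (x - b0) / a0) ` ((\<lambda>x. a * x + b) ` B)" for a b
    by (simp add: image_image add_divide_distrib diff_divide_distrib algebra_simps)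
  have undo: "(\<lambda>x. (x - b0) / a0) ` ((\<lambda>x. a0 * x + b0) ` B) = B"
    using assms by (simp add: image_image)
  have "bij_betw ?f ?S ?T"
  proof (rule bij_betw_byWitness[where f' = ?g])
    show "\<forall>p\<in>?S. ?g (?f p) = p" and "\<forall>p\<in>?T. ?f (?g p) = p"
      using assms by auto
    show "?f ` ?S \<subseteq> ?T"
    proof
      fix p assume "p \<in> ?f ` ?S"
      then obtain a b where "a \<noteq> 0" "(\<lambda>x. a * x + b) ` B = B" "p = (a0 * a, a0 * b + b0)"
        by auto
      then show "p \<in> ?T"
        using assms compose[of a b] by simp
    qed
    show "?g ` ?T \<subseteq> ?S"
    proof
      fix p assume "p \<in> ?g ` ?T"
      then obtain a b where "a \<noteq> 0" "(\<lambda>x. a * x + b) ` B = (\<lambda>x. a0 * x + b0) ` B"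
          "p = (a / a0, (b - b0) / a0)"
        by auto
      then show "p \<in> ?S"
        using assms decompose[of a b] undo by simp
    qed
  qed
  then show ?thesis
    by (simp add: bij_betw_same_card affine_stabilizer_def)
qed

lemma card_affine_maps_covering:
  fixes B :: "'a::{field,finite} set"
  shows "card {(a, b). a \<noteq> 0 \<and> T \<subseteq> (\<lambda>x. a * x + b) ` B} =
    card (affine_stabilizer B) * card {X \<in> GA1_orbit B. T \<subseteq> X}"
proof -
  define fiber where "fiber X = {(a, b). a \<noteq> 0 \<and> (\<lambda>x. a * x + b) ` B = X}" for X
  have "{(a, b). a \<noteq> 0 \<and> T \<subseteq> (\<lambda>x. a * x + b) ` B} = (\<Union>X \<in> {X \<in> GA1_orbit B. T \<subseteq> X}. fiber X)"
    unfolding fiber_def GA1_orbit_eq_image by auto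
  then have "card {(a, b). a \<noteq> 0 \<and> T \<subseteq> (\<lambda>x. a * x + b) ` B} =
      (\<Sum>X \<in> {X \<in> GA1_orbit B. T \<subseteq> X}. card (fiber X))"
    by (simp only:) (rule card_UN_disjoint; auto simp: fiber_def)
  also have "\<dots> = (\<Sum>X \<in> {X \<in> GA1_orbit B. T \<subseteq> X}. card (affine_stabilizer B))"
  proof (rule sum.cong[OF refl])
    fix X assume "X \<in> {X \<in> GA1_orbit B. T \<subseteq> X}"
    then obtain a0 b0 where "a0 \<noteq> 0" "X = (\<lambda>x. a0 * x + b0) ` B"
      unfolding GA1_orbit_def by auto
    then show "card (fiber X) = card (affine_stabilizer B)"
      unfolding fiber_def by (simp add: card_affine_maps_onto_image)
  qed
  finally show ?thesis
    by (simp add: fiber_def)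
qed

lemma affine_map_through_two_points:
  fixes t1 :: "'a::field"
  assumes "t1 \<noteq> t2" and "x \<noteq> y"
  defines "a \<equiv> (t2 - t1) / (x - y)"
  shows "a \<noteq> 0" and "(t2 - (t1 - a * y)) / a = x" and "(t1 - (t1 - a * y)) / a = y"
proof -
  show "a \<noteq> 0"
    using assms by (simp add: a_def)
  moreover have "a * (x - y) = t2 - t1"
    using assms by (simp add: a_def)
  then have "t2 - (t1 - a * y) = a * x"
    by (simp add: algebra_simps)
  ultimately show "(t2 - (t1 - a * y)) / a = x" and "(t1 - (t1 - a * y)) / a = y"
    by simp_all
qed

text \<open>An affine map carrying (y, x) to (t1, t2) carries y + u (x - y) to t1 + u (t2 - t1), so for
  u = (t3 - t1) / (t2 - t1) the maps whose image of B covers {t1, t2, t3} correspond to the pairs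
  of preimages (x, y) of (t2, t1).\<close>
lemma card_affine_maps_covering_eq_ratio_pairs:
  fixes t1 :: "'a::field"
  assumes "t1 \<noteq> t2"
  shows "card {(a, b). a \<noteq> 0 \<and> {t1, t2, t3} \<subseteq> (\<lambda>x. a * x + b) ` B} =
    card (ratio_pairs B ((t3 - t1) / (t2 - t1)))"
proof -
  define u where "u = (t3 - t1) / (t2 - t1)"
  let ?S = "{(a, b). a \<noteq> 0 \<and> {t1, t2, t3} \<subseteq> (\<lambda>x. a * x + b) ` B}"
  let ?f = "\<lambda>(a, b). ((t2 - b) / a, (t1 - b) / a)"
  let ?g = "\<lambda>(x, y). ((t2 - t1) / (x - y), t1 - (t2 - t1) / (x - y) * y)"
  have t21: "t2 - t1 \<noteq> 0"
    using assms by simp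
  have preimage_t3: "(t3 - b) / a = (t1 - b) / a + u * ((t2 - b) / a - (t1 - b) / a)" if "a \<noteq> 0" for a b
    using that t21 by (simp add: u_def field_simps)
  have mem_S: "(a, b) \<in> ?S \<longleftrightarrow> a \<noteq> 0 \<and> (t1 - b) / a \<in> B \<and> (t2 - b) / a \<in> B \<and> (t3 - b) / a \<in> B"
    for a b
    by (cases "a = 0") (simp_all add: mem_affine_image_iff)
  have g_maps_to: "fst (?g (x, y)) \<noteq> 0 \<and> ?f (?g (x, y)) = (x, y)" if "x \<noteq> y" for x y
    using affine_map_through_two_points[OF assms that] by simp
  have "bij_betw ?f ?S (ratio_pairs B u)"
  proof (rule bij_betw_byWitness[where f' = ?g])
    show "\<forall>p\<in>?S. ?g (?f p) = p"
      using t21 by (auto simp: field_simps)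
    show "\<forall>p\<in>ratio_pairs B u. ?f (?g p) = p"
      using g_maps_to by (auto simp: ratio_pairs_def)
    show "?f ` ?S \<subseteq> ratio_pairs B u"
    proof
      fix p assume "p \<in> ?f ` ?S"
      then obtain a b where ab: "(a, b) \<in> ?S" and p: "p = ?f (a, b)"
        by auto
      have "a \<noteq> 0" and "(t1 - b) / a \<in> B" "(t2 - b) / a \<in> B" "(t3 - b) / a \<in> B"
        using mem_S[THEN iffD1, OF ab] by simp_all
      moreover have "(t2 - b) / a \<noteq> (t1 - b) / a"
        using \<open>a \<noteq> 0\<close> assms by (simp add: divide_cancel_right)
      ultimately show "p \<in> ratio_pairs B u"
        using preimage_t3[of a b] by (simp add: p ratio_pairs_def)
    qed
    show "?g ` ratio_pairs B u \<subseteq> ?S"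
    proof
      fix p assume "p \<in> ?g ` ratio_pairs B u"
      then obtain x y where xy: "(x, y) \<in> ratio_pairs B u" and p: "p = ?g (x, y)"
        by auto
      obtain a b where ab: "?g (x, y) = (a, b)"
        by fastforce
      then have "a \<noteq> 0" and "(t2 - b) / a = x" and "(t1 - b) / a = y"
        using g_maps_to[of x y] xy by (auto simp: ratio_pairs_def)
      moreover have "p = (a, b)"
        using p ab by simp
      ultimately show "p \<in> ?S"
        using xy preimage_t3[OF \<open>a \<noteq> 0\<close>, of b] mem_S[of a b] by (simp add: ratio_pairs_def)
    qed
  qed
  then show ?thesis
    by (simp add: bij_betw_same_card u_def)
qed

lemma is_3_design_GA1_orbit_iff:
  fixes B :: "'a::{field,finite} set"
  shows "is_3_design UNIV (GA1_orbit B) (card B) \<longleftrightarrow> indep_of_u (\<lambda>u. card (ratio_pairs B u))"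
proof -
  define s where "s = card (affine_stabilizer B)"
  have count: "s * card {X \<in> GA1_orbit B. {t1, t2, t3} \<subseteq> X} = card (ratio_pairs B ((t3 - t1) / (t2 - t1)))"
    if "t1 \<noteq> t2" for t1 t2 t3 :: 'a
    using card_affine_maps_covering[of "{t1, t2, t3}" B] card_affine_maps_covering_eq_ratio_pairs[OF that, of t3 B]
    unfolding s_def by simp
  show ?thesis
  proof
    assume "is_3_design UNIV (GA1_orbit B) (card B)"
    then obtain lam where lam: "\<forall>T. T \<subseteq> (UNIV :: 'a set) \<and> card T = 3 \<longrightarrow> card {X \<in> GA1_orbit B. T \<subseteq> X} = lam"
      unfolding is_3_design_def by (elim conjE exE)
    have "card (ratio_pairs B u) = s * lam" if "u \<notin> {0, 1}" for u
    proof -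
      have "card {0, 1, u} = 3"
        using that by simp
      then have "card {X \<in> GA1_orbit B. {0, 1, u} \<subseteq> X} = lam"
        using lam by blast
      then show ?thesis
        using count[of 0 1 u] by simp
    qed
    then show "indep_of_u (\<lambda>u. card (ratio_pairs B u))"
      unfolding indep_of_u_def by blast
  next
    assume "indep_of_u (\<lambda>u. card (ratio_pairs B u))"
    then obtain c where c: "card (ratio_pairs B u) = c" if "u \<notin> {0, 1}" for u
      unfolding indep_of_u_def by blast
    have "card {X \<in> GA1_orbit B. T \<subseteq> X} = c div s" if "card T = 3" for T :: "'a set"
    proof -
      obtain t1 t2 t3 where T: "T = {t1, t2, t3}" and "t1 \<noteq> t2" "t2 \<noteq> t3" "t1 \<noteq> t3"
        using \<open>card T = 3\<close> by (auto simp: card_3_iff)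
      then have u: "(t3 - t1) / (t2 - t1) \<notin> {0, 1}"
        by simp
      have "s * card {X \<in> GA1_orbit B. T \<subseteq> X} = c"
        using count[OF \<open>t1 \<noteq> t2\<close>, of t3] c[OF u] T by simp
      moreover have "s > 0"
        unfolding s_def by (rule card_affine_stabilizer_pos)
      ultimately show ?thesis
        by (metis nonzero_mult_div_cancel_left neq0_conv)
    qed
    then show "is_3_design UNIV (GA1_orbit B) (card B)"
      unfolding is_3_design_def using card_GA1_orbit_member by blast
  qed
qed

section \<open>Fields of order 2^n: trace and Walsh transform\<close>

lemma CHAR_eq_2_if_card_UNIV:
  assumes "card (UNIV :: 'a::{field,finite} set) = 2 ^ n"
  shows "CHAR('a) = 2"
proof -
  have "prime CHAR('a)"
    by (intro prime_CHAR_semidom finite_imp_CHAR_pos) simp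
  moreover have "CHAR('a) dvd 2 ^ n"
    using CHAR_dvd_CARD[where 'a = 'a] assms by simp
  ultimately show ?thesis
    using prime_dvd_power primes_dvd_imp_eq two_is_prime_nat by blast
qed

lemma power_card_UNIV_eq_self:
  fixes x :: "'a::{field,finite}"
  shows "x ^ card (UNIV :: 'a set) = x"
proof (cases "x = 0")
  case False
  let ?U = "UNIV - {0 :: 'a}"
  have "(\<Prod>y\<in>?U. x * y) = \<Prod>?U"
    by (rule prod.reindex_bij_witness[of _ "\<lambda>y. y / x" "\<lambda>y. x * y"]) (use False in auto)
  then have "x ^ card ?U = 1"
    by (simp add: prod.distrib)
  moreover have "card (UNIV :: 'a set) = Suc (card ?U)"
    by (simp add: card_Diff_singleton card_gt_0_iff Suc_diff_1)
  ultimately have "x ^ card (UNIV :: 'a set) = x * 1"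
    by (metis power_Suc)
  then show ?thesis
    by simp
qed (simp add: finite_UNIV_card_ge_0)
context
  fixes n :: nat
  assumes card_UNIV: "card (UNIV :: 'a::{field,finite} set) = 2 ^ n"
begin

lemma CHAR_eq_2: "CHAR('a) = 2"
  using CHAR_eq_2_if_card_UNIV[OF card_UNIV] .

lemma add_self_eq_0: "(x :: 'a) + x = 0"
  using uminus_CHAR_2[OF CHAR_eq_2, of x] by (metis add.right_inverse)

lemma add_eq_0_iff_eq: "(x :: 'a) + y = 0 \<longleftrightarrow> x = y"
  by (metis add_self_eq_0 add_right_cancel)

lemma abs_trace_add: "abs_trace n (x + y) = abs_trace n x + abs_trace n (y :: 'a)"
proof -
  have "(x + y) ^ 2 ^ i = x ^ 2 ^ i + y ^ 2 ^ i" for i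
    by (rule freshmans_dream') (simp_all add: CHAR_eq_2)
  then show ?thesis
    by (simp add: abs_trace_def sum.distrib)
qed

lemma abs_trace_square: "abs_trace n (x :: 'a) ^ 2 = abs_trace n x"
proof -
  have "abs_trace n x ^ 2 = (\<Sum>i<n. (x ^ 2 ^ i) ^ 2)"
    unfolding abs_trace_def using CHAR_eq_2 by (intro freshmans_dream_sum) simp_all
  also have "\<dots> = (\<Sum>i<n. x ^ 2 ^ Suc i)"
    by (simp add: power_mult[symmetric] mult.commute)
  also have "\<dots> + x = (\<Sum>i<Suc n. x ^ 2 ^ i)"
    by (subst sum.lessThan_Suc_shift) simp
  also have "\<dots> = abs_trace n x + x ^ 2 ^ n"
    by (simp add: abs_trace_def)
  also have "x ^ 2 ^ n = x"
    using power_card_UNIV_eq_self[of x] card_UNIV by simp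
  finally show ?thesis
    by simp
qed

lemma abs_trace_0_or_1: "abs_trace n (x :: 'a) = 0 \<or> abs_trace n x = 1"
proof -
  have "abs_trace n x * (abs_trace n x - 1) = 0"
    using abs_trace_square[of x] by (simp add: power2_eq_square algebra_simps)
  then show ?thesis
    by simp
qed

text \<open>The trace is a polynomial of degree 2^(n-1) < q, so it cannot vanish on all of GF(q).\<close>
lemma abs_trace_not_identically_0: "\<exists>x :: 'a. abs_trace n x \<noteq> 0"
proof -
  have "card {0, 1 :: 'a} \<le> 2 ^ n"
    unfolding card_UNIV[symmetric] by (intro card_mono) auto
  then have "n > 0"
    by (cases n) auto
  define p :: "'a poly" where "p = (\<Sum>i<n. monom 1 (2 ^ i))"
  have coeff_p: "coeff p j = (\<Sum>i<n. if 2 ^ i = j then 1 else 0)" for j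
    by (simp add: p_def coeff_sum coeff_monom)
  have "coeff p (2 ^ (n - 1)) = (\<Sum>i\<in>{n - 1}. 1)"
    unfolding coeff_p using \<open>n > 0\<close> by (intro sum.mono_neutral_cong_right) auto
  then have "p \<noteq> 0"
    by auto
  have "degree p \<le> 2 ^ (n - 1)"
  proof (rule degree_le, intro allI impI)
    fix j :: nat
    assume "2 ^ (n - 1) < j"
    moreover have "(2::nat) ^ i \<le> 2 ^ (n - 1)" if "i < n" for i
      using that by (intro power_increasing) auto
    ultimately show "coeff p j = 0"
      unfolding coeff_p by (intro sum.neutral) fastforce
  qed
  moreover have "(2::nat) ^ (n - 1) < 2 ^ n"
    using \<open>n > 0\<close> by simp
  ultimately have "card {x. poly p x = 0} \<noteq> card (UNIV :: 'a set)"
    using card_poly_roots_bound[OF \<open>p \<noteq> 0\<close>] card_UNIV by linarith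
  then obtain x where "poly p x \<noteq> 0"
    by force
  then show ?thesis
    by (auto simp: p_def abs_trace_def poly_sum poly_monom)
qed

lemma sgn_tr_add: "sgn_tr n (x + y) = sgn_tr n x * sgn_tr n (y :: 'a)"
proof -
  have "(1 :: 'a) + 1 = 0"
    by (rule add_self_eq_0)
  then show ?thesis
    using abs_trace_0_or_1[of x] abs_trace_0_or_1[of y]
    by (elim disjE) (simp_all add: sgn_tr_def abs_trace_add)
qed

lemma sum_sgn_tr: "(\<Sum>x\<in>UNIV. sgn_tr n (x :: 'a)) = 0"
proof -
  obtain b :: 'a where "abs_trace n b \<noteq> 0"
    using abs_trace_not_identically_0 by blast
  then have "sgn_tr n b = -1"
    by (simp add: sgn_tr_def)
  have "(\<Sum>x\<in>UNIV. sgn_tr n (x :: 'a)) = (\<Sum>x\<in>UNIV. sgn_tr n (x + b))"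
    by (rule sum.reindex_bij_witness[of _ "\<lambda>x. x + b" "\<lambda>x. x + b"])
      (simp_all add: add.assoc add_self_eq_0)
  also have "\<dots> = - (\<Sum>x\<in>UNIV. sgn_tr n (x :: 'a))"
    by (simp add: sgn_tr_add \<open>sgn_tr n b = -1\<close> sum_negf)
  finally show ?thesis
    by simp
qed

lemma sum_sgn_tr_mult: "(\<Sum>\<alpha>\<in>UNIV. sgn_tr n (\<alpha> * (x :: 'a))) = (if x = 0 then 2 ^ n else (0 :: int))"
proof (cases "x = 0")
  case True
  then show ?thesis
    using card_UNIV by (simp add: sgn_tr_def abs_trace_def power_0_left)
next
  case False
  have "(\<Sum>\<alpha>\<in>UNIV. sgn_tr n (\<alpha> :: 'a)) = (\<Sum>\<alpha>\<in>UNIV. sgn_tr n (\<alpha> * x))"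
    by (rule sum.reindex_bij_witness[of _ "\<lambda>\<alpha>. \<alpha> * x" "\<lambda>\<alpha>. \<alpha> / x"]) (use False in auto)
  then show ?thesis
    using False sum_sgn_tr by simp
qed

lemma walsh_product:
  "walsh n B \<alpha> * walsh n B (u * \<alpha>) * walsh n B (v * \<alpha>) =
   (\<Sum>y\<in>UNIV. \<Sum>x\<in>UNIV. \<Sum>z\<in>UNIV. sgn_char B x * sgn_char B y * sgn_char B z *
      sgn_tr n (\<alpha> * (u * x + v * y + (z :: 'a))))"
  unfolding walsh_def sum_distrib_left sum_distrib_right
  by (intro sum.cong refl) (simp add: sgn_tr_add distrib_left mult_ac)

lemma sum_walsh_triple:
  "(\<Sum>\<alpha>\<in>UNIV. walsh n B \<alpha> * walsh n B (u * \<alpha>) * walsh n B (v * \<alpha>)) =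
   2 ^ n * (\<Sum>x\<in>UNIV. \<Sum>y\<in>UNIV. sgn_char B x * sgn_char B y * sgn_char B (u * x + v * (y :: 'a)))"
proof -
  let ?c = "sgn_char B"
  have "(\<Sum>\<alpha>\<in>UNIV. walsh n B \<alpha> * walsh n B (u * \<alpha>) * walsh n B (v * \<alpha>)) =
      (\<Sum>y\<in>UNIV. \<Sum>x\<in>UNIV. \<Sum>z\<in>UNIV. ?c x * ?c y * ?c z *
         (\<Sum>\<alpha>\<in>UNIV. sgn_tr n (\<alpha> * (u * x + v * y + z))))"
    unfolding walsh_product sum_distrib_left
    by (subst sum.swap, rule sum.cong[OF refl], subst sum.swap, rule sum.cong[OF refl], rule sum.swap)
  also have "\<dots> = (\<Sum>y\<in>UNIV. \<Sum>x\<in>UNIV. \<Sum>z\<in>UNIV.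
      if z = u * x + v * y then 2 ^ n * (?c x * ?c y * ?c z) else 0)"
    by (intro sum.cong refl) (auto simp: sum_sgn_tr_mult add_eq_0_iff_eq)
  also have "\<dots> = (\<Sum>y\<in>UNIV. \<Sum>x\<in>UNIV. 2 ^ n * (?c x * ?c y * ?c (u * x + v * y)))"
    by (simp add: sum.delta)
  also have "\<dots> = 2 ^ n * (\<Sum>x\<in>UNIV. \<Sum>y\<in>UNIV. ?c x * ?c y * ?c (u * x + v * y))"
    by (subst sum.swap) (simp add: sum_distrib_left)
  finally show ?thesis .
qed

lemma N_B_eq_card_pairs:
  "N_B B u v 1 = card {(x, y) \<in> B \<times> B. u * x + v * y \<in> (B :: 'a set)}"
proof -
  have "{(x, y, z). x \<in> B \<and> y \<in> B \<and> z \<in> B \<and> u * x + v * y + 1 * z = 0} =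
      (\<lambda>(x, y). (x, y, u * x + v * y)) ` {(x, y) \<in> B \<times> B. u * x + v * y \<in> B}"
    by (auto simp: add_eq_0_iff_eq image_iff)
  moreover have "inj_on (\<lambda>(x, y). (x, y, u * x + v * y)) {(x, y) \<in> B \<times> B. u * x + v * y \<in> B}"
    by (auto simp: inj_on_def)
  ultimately show ?thesis
    unfolding N_B_def by (simp add: card_image)
qed

lemma N_B_eq_card_ratio_pairs: "N_B B u (1 + u) 1 = card (ratio_pairs B u) + card (B :: 'a set)"
proof -
  have "u * x + (1 + u) * y = y + u * (x - y)" for x y :: 'a
    using minus_CHAR_2[OF CHAR_eq_2, of x y] by (simp add: algebra_simps)
  then have "{(x, y) \<in> B \<times> B. u * x + (1 + u) * y \<in> B} = ratio_pairs B u \<union> (\<lambda>x. (x, x)) ` B"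
    unfolding ratio_pairs_def by auto
  moreover have "ratio_pairs B u \<inter> (\<lambda>x. (x, x)) ` B = {}"
    unfolding ratio_pairs_def by auto
  moreover have "card ((\<lambda>x. (x, x)) ` B) = card B"
    by (rule card_image) (auto simp: inj_on_def)
  ultimately show ?thesis
    by (simp add: N_B_eq_card_pairs card_Un_disjoint)
qed

end

lemma indep_of_u_iff_comp_inj:
  fixes F :: "'a::{field,finite} \<Rightarrow> 'b" and G :: "'a \<Rightarrow> 'c"
  assumes "\<And>u. u \<notin> {0, 1} \<Longrightarrow> F u = H (G u)" and "inj H"
  shows "indep_of_u F \<longleftrightarrow> indep_of_u G"
proof
  assume "indep_of_u F"
  then obtain c where c: "F u = c" if "u \<notin> {0, 1}" for u
    unfolding indep_of_u_def by blast
  show "indep_of_u G"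
  proof (cases "\<exists>u0 :: 'a. u0 \<notin> {0, 1}")
    case True
    then obtain u0 :: 'a where "u0 \<notin> {0, 1}"
      by blast
    then have "H (G u) = H (G u0)" if "u \<notin> {0, 1}" for u
      using assms(1)[OF that] assms(1)[OF \<open>u0 \<notin> {0, 1}\<close>] c[OF that] c[OF \<open>u0 \<notin> {0, 1}\<close>]
      by simp
    then have "G u = G u0" if "u \<notin> {0, 1}" for u
      using that injD[OF assms(2)] by blast
    then show ?thesis
      unfolding indep_of_u_def by blast
  next
    case False
    then show ?thesis
      unfolding indep_of_u_def by blast
  qed
next
  assume "indep_of_u G"
  then obtain c where "G u = c" if "u \<notin> {0, 1}" for u
    unfolding indep_of_u_def by blast
  then have "F u = H c" if "u \<notin> {0, 1}" for u
    using assms(1) that by simp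
  then show "indep_of_u F"
    unfolding indep_of_u_def by blast
qed

theorem theorem9:
  fixes B :: "'a::{field,finite} set" and n k :: nat
  assumes "card (UNIV :: 'a set) = 2 ^ n" and "card B = k" and "k \<ge> 3"
  shows "(is_3_design (UNIV :: 'a set) (GA1_orbit B) k
            \<longleftrightarrow> indep_of_u (\<lambda>u. \<Sum>x\<in>UNIV. \<Sum>y\<in>UNIV.
                   sgn_char B x * sgn_char B y * sgn_char B (u * x + (1 + u) * y)))
       \<and> (is_3_design (UNIV :: 'a set) (GA1_orbit B) k
            \<longleftrightarrow> indep_of_u (\<lambda>u. \<Sum>\<alpha>\<in>UNIV.
                   walsh n B \<alpha> * walsh n B (u * \<alpha>) * walsh n B ((1 + u) * \<alpha>)))
       \<and> (is_3_design (UNIV :: 'a set) (GA1_orbit B) k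
            \<longleftrightarrow> indep_of_u (\<lambda>u. N_B B u (1 + u) 1))"
proof -
  note card_UNIV = assms(1)
  let ?q = "int (card (UNIV :: 'a set))" and ?k = "int (card B)"
  have design_iff_N: "is_3_design (UNIV :: 'a set) (GA1_orbit B) k \<longleftrightarrow> indep_of_u (\<lambda>u. N_B B u (1 + u) 1)"
    using is_3_design_GA1_orbit_iff[of B] assms(2)
      indep_of_u_iff_comp_inj[of "\<lambda>u. N_B B u (1 + u) 1" "\<lambda>m. m + card B" "\<lambda>u. card (ratio_pairs B u)"]
    by (simp add: N_B_eq_card_ratio_pairs[OF card_UNIV] inj_on_def)
  have "1 + u \<noteq> 0" if "u \<notin> {0, 1}" for u :: 'a
    using that add_eq_0_iff_eq[OF card_UNIV, of 1 u] by auto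
  then have S_iff_N: "indep_of_u (\<lambda>u. \<Sum>x\<in>UNIV. \<Sum>y\<in>UNIV.
        sgn_char B x * sgn_char B y * sgn_char B (u * x + (1 + u) * y))
      \<longleftrightarrow> indep_of_u (\<lambda>u. N_B B u (1 + u) 1)"
    by (intro indep_of_u_iff_comp_inj[where H = "\<lambda>m. ?q ^ 2 - 6 * ?q * ?k + 12 * ?k ^ 2 - 8 * int m"])
      (simp_all add: sum_sgn_char_triple N_B_eq_card_pairs[OF card_UNIV] inj_on_def)
  have W_iff_S: "indep_of_u (\<lambda>u. \<Sum>\<alpha>\<in>UNIV. walsh n B \<alpha> * walsh n B (u * \<alpha>) * walsh n B ((1 + u) * \<alpha>))
      \<longleftrightarrow> indep_of_u (\<lambda>u. \<Sum>x\<in>UNIV. \<Sum>y\<in>UNIV.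
        sgn_char B x * sgn_char B y * sgn_char B (u * x + (1 + u) * y))"
    by (intro indep_of_u_iff_comp_inj[where H = "\<lambda>s. 2 ^ n * s"])
      (simp_all add: sum_walsh_triple[OF card_UNIV] inj_on_def)
  show ?thesis
    using design_iff_N S_iff_N W_iff_S by blast
qed

end
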